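(* Let $X=(X_i)_{i\ge1}$ and $Y=(Y_j)_{j\ge1}$ be real-valued partially exchangeable sequences, so that there exist random probability measures $(\tilde p_1,\tilde p_2)$ on $\mathbb{R}$ such that, conditionally on $(\tilde p_1,\tilde p_2)$, all $X_i$ and $Y_j$ are independent with $X_i\sim\tilde p_1$ and $Y_j\sim\tilde p_2$. Assume that $\tilde p_1$ and $\tilde p_2$ have the same marginal distribution and that $X_1$ has finite, strictly positive variance. Then for all $i\neq i'$ and all $j$, $$-\operatorname{corr}(X_i,X_{i'})\le \operatorname{corr}(X_i,Y_j)\le \operatorname{corr}(X_i,X_{i'}).$$
   Context: Partial exchangeability of $X$ and $Y$ means that for all $n,m$ and all permutations $\pi_1$ of $\{1,\dots,n\}$ and $\pi_2$ of $\{1,\dots,m\}$, $((X_i)_{i=1}^n,(Y_j)_{j=1}^m)$ and $((X_{\pi_1(i)})_{i=1}^n,(Y_{\pi_2(j)})_{j=1}^m)$ have the same distribution; by de Finetti's theorem this is equivalent to the conditional i.i.d. representation in the claim. *)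

theory Defs
  imports "HOL-Probability.Probability"
begin

definition covariance :: "'a measure \<Rightarrow> ('a \<Rightarrow> real) \<Rightarrow> ('a \<Rightarrow> real) \<Rightarrow> real" where
  "covariance M U V =
     integral\<^sup>L M (\<lambda>w. (U w - integral\<^sup>L M U) * (V w - integral\<^sup>L M V))"

definition var :: "'a measure \<Rightarrow> ('a \<Rightarrow> real) \<Rightarrow> real" where
  "var M U = integral\<^sup>L M (\<lambda>w. (U w - integral\<^sup>L M U)\<^sup>2)"

definition corr :: "'a measure \<Rightarrow> ('a \<Rightarrow> real) \<Rightarrow> ('a \<Rightarrow> real) \<Rightarrow> real" where
  "corr M U V = covariance M U V / (sqrt (var M U) * sqrt (var M V))"

end

(*
  Conditionally on (P1, P2) the variables X i, X i' and Y j are independent with laws P1, P1 and P2.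
  Hence the second moment of an affine combination a X i + b X i' + c Y j + d equals that of the
  same combination of the conditional means mean P1, mean P1, mean P2, plus (a^2 + b^2 + c^2) times
  the expected conditional variance (the same for P1 and P2, which have the same law). Reading off
  variances and covariances gives Var X i = Var Y j = Var (mean P1) + E [var P1],
  Cov (X i, X i') = Var (mean P1) and Cov (X i, Y j) = Cov (mean P1, mean P2). Since mean P1 and
  mean P2 have equal variances, |Cov (mean P1, mean P2)| <= Var (mean P1), and dividing by the
  common variance bounds the correlations.
*)

theory Submission
  imports Defs
begin

lemma var_nonneg: "0 \<le> var M U"
  by (simp add: var_def)

lemma covariance_self: "covariance M U U = var M U"
  by (simp add: covariance_def var_def power2_eq_square)

lemma corr_eq_covariance_div_var:
  assumes "var M V = var M U"
  shows "corr M U V = covariance M U V / var M U"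
  using var_nonneg[of M U] by (simp add: corr_def assms)

context prob_space
begin

lemma square_integrable_add:
  fixes U V :: "'a \<Rightarrow> real"
  assumes [measurable]: "U \<in> borel_measurable M" "V \<in> borel_measurable M"
    and "integrable M (\<lambda>w. (U w)\<^sup>2)" "integrable M (\<lambda>w. (V w)\<^sup>2)"
  shows "integrable M (\<lambda>w. (U w + V w)\<^sup>2)"
proof (rule Bochner_Integration.integrable_bound)
  show "integrable M (\<lambda>w. 2 * (U w)\<^sup>2 + 2 * (V w)\<^sup>2)" using assms by simp
  have "(U w + V w)\<^sup>2 \<le> 2 * (U w)\<^sup>2 + 2 * (V w)\<^sup>2" for w
    using sum_squares_bound[of "U w" "V w"] by (simp add: power2_sum)
  then show "AE w in M. norm ((U w + V w)\<^sup>2) \<le> norm (2 * (U w)\<^sup>2 + 2 * (V w)\<^sup>2)"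
    by simp
qed simp

lemma square_integrable_mult:
  fixes U V :: "'a \<Rightarrow> real"
  assumes [measurable]: "U \<in> borel_measurable M" "V \<in> borel_measurable M"
    and "integrable M (\<lambda>w. (U w)\<^sup>2)" "integrable M (\<lambda>w. (V w)\<^sup>2)"
  shows "integrable M (\<lambda>w. U w * V w)"
proof (rule Bochner_Integration.integrable_bound)
  show "integrable M (\<lambda>w. (U w)\<^sup>2 + (V w)\<^sup>2)" using assms by simp
  have "\<bar>U w * V w\<bar> \<le> (U w)\<^sup>2 + (V w)\<^sup>2" for w
    using sum_squares_bound[of "\<bar>U w\<bar>" "\<bar>V w\<bar>"] mult_nonneg_nonneg[OF abs_ge_zero abs_ge_zero, of "U w" "V w"]
    unfolding abs_mult by (simp only: power2_abs)
  then show "AE w in M. norm (U w * V w) \<le> norm ((U w)\<^sup>2 + (V w)\<^sup>2)"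
    by simp
qed simp

lemma integral_eq_squares:
  fixes U :: "'a \<Rightarrow> real"
  assumes [measurable]: "U \<in> borel_measurable M" and "integrable M (\<lambda>w. (U w)\<^sup>2)"
  shows "integral\<^sup>L M U = ((\<integral>w. (U w + 1)\<^sup>2 \<partial>M) - (\<integral>w. (U w)\<^sup>2 \<partial>M) - 1) / 2"
proof -
  have "integrable M U" using assms square_integrable_imp_integrable by blast
  have "(\<integral>w. (U w + 1)\<^sup>2 \<partial>M) = (\<integral>w. (U w)\<^sup>2 + 2 * U w + 1 \<partial>M)"
    by (simp add: power2_sum algebra_simps)
  also have "\<dots> = (\<integral>w. (U w)\<^sup>2 \<partial>M) + 2 * integral\<^sup>L M U + 1"
    using assms \<open>integrable M U\<close> by (simp add: prob_space)
  finally show ?thesis by simp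
qed

lemma integral_mult_eq_squares:
  fixes U V :: "'a \<Rightarrow> real"
  assumes [measurable]: "U \<in> borel_measurable M" "V \<in> borel_measurable M"
    and "integrable M (\<lambda>w. (U w)\<^sup>2)" "integrable M (\<lambda>w. (V w)\<^sup>2)"
  shows "(\<integral>w. U w * V w \<partial>M) = ((\<integral>w. (U w + V w)\<^sup>2 \<partial>M) - (\<integral>w. (U w)\<^sup>2 \<partial>M) - (\<integral>w. (V w)\<^sup>2 \<partial>M)) / 2"
proof -
  have "(\<integral>w. (U w + V w)\<^sup>2 \<partial>M) = (\<integral>w. (U w)\<^sup>2 + 2 * (U w * V w) + (V w)\<^sup>2 \<partial>M)"
    by (simp add: power2_sum algebra_simps)
  also have "\<dots> = (\<integral>w. (U w)\<^sup>2 \<partial>M) + 2 * (\<integral>w. U w * V w \<partial>M) + (\<integral>w. (V w)\<^sup>2 \<partial>M)"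
    using assms square_integrable_mult[OF assms] by simp
  finally show ?thesis by simp
qed

lemma var_eq_integral_square:
  fixes U :: "'a \<Rightarrow> real"
  assumes "U \<in> borel_measurable M" "integrable M (\<lambda>w. (U w)\<^sup>2)"
  shows "var M U = (\<integral>w. (U w)\<^sup>2 \<partial>M) - (integral\<^sup>L M U)\<^sup>2"
  unfolding var_def using assms square_integrable_imp_integrable by (intro variance_eq) blast+

lemma covariance_eq_integral_mult:
  fixes U V :: "'a \<Rightarrow> real"
  assumes "integrable M U" "integrable M V" "integrable M (\<lambda>w. U w * V w)"
  shows "covariance M U V = (\<integral>w. U w * V w \<partial>M) - integral\<^sup>L M U * integral\<^sup>L M V"
proof -
  have "(\<lambda>w. (U w - integral\<^sup>L M U) * (V w - integral\<^sup>L M V))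
      = (\<lambda>w. U w * V w - integral\<^sup>L M V * U w - integral\<^sup>L M U * V w + integral\<^sup>L M U * integral\<^sup>L M V)"
    by (simp add: fun_eq_iff algebra_simps)
  then show ?thesis
    unfolding covariance_def using assms by (simp add: prob_space)
qed

(* With U', V' the conditional means of U, V this is the law of total covariance: only the
   variances pick up the expected conditional variances alpha and beta. *)
lemma var_covariance_eq_if_shifted_square_moments:
  fixes U V U' V' :: "'a \<Rightarrow> real"
  assumes [measurable]: "U \<in> borel_measurable M" "V \<in> borel_measurable M"
      "U' \<in> borel_measurable M" "V' \<in> borel_measurable M"
    and U'V': "integrable M (\<lambda>w. (U' w)\<^sup>2)" "integrable M (\<lambda>w. (V' w)\<^sup>2)"
    and sq: "\<And>a c d. integrable M (\<lambda>w. (a * U w + c * V w + d)\<^sup>2)"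
    and eq: "\<And>a c d. (\<integral>w. (a * U w + c * V w + d)\<^sup>2 \<partial>M)
        = (\<integral>w. (a * U' w + c * V' w + d)\<^sup>2 \<partial>M) + a\<^sup>2 * \<alpha> + c\<^sup>2 * \<beta>"
  shows "var M U = var M U' + \<alpha>" "var M V = var M V' + \<beta>"
    and "covariance M U V = covariance M U' V'"
proof -
  have UV: "integrable M (\<lambda>w. (U w)\<^sup>2)" "integrable M (\<lambda>w. (V w)\<^sup>2)"
    using sq[of 1 0 0] sq[of 0 1 0] by simp_all
  have EU2: "(\<integral>w. (U w)\<^sup>2 \<partial>M) = (\<integral>w. (U' w)\<^sup>2 \<partial>M) + \<alpha>"
    and EV2: "(\<integral>w. (V w)\<^sup>2 \<partial>M) = (\<integral>w. (V' w)\<^sup>2 \<partial>M) + \<beta>"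
    using eq[of 1 0 0] eq[of 0 1 0] by simp_all
  have EU: "integral\<^sup>L M U = integral\<^sup>L M U'" and EV: "integral\<^sup>L M V = integral\<^sup>L M V'"
    using eq[of 1 0 1] eq[of 0 1 1] EU2 EV2 UV U'V'
    by (simp_all add: integral_eq_squares[of U] integral_eq_squares[of U'] integral_eq_squares[of V] integral_eq_squares[of V'])
  have EUV: "(\<integral>w. U w * V w \<partial>M) = (\<integral>w. U' w * V' w \<partial>M)"
    using eq[of 1 1 0] EU2 EV2 UV U'V'
    by (simp add: integral_mult_eq_squares[of U V] integral_mult_eq_squares[of U' V'])
  show "var M U = var M U' + \<alpha>" "var M V = var M V' + \<beta>"
    using UV U'V' EU EV EU2 EV2 by (simp_all add: var_eq_integral_square)
  show "covariance M U V = covariance M U' V'"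
    using UV U'V' EU EV EUV
    by (subst (1 2) covariance_eq_integral_mult)
       (auto intro: square_integrable_imp_integrable square_integrable_mult)
qed

lemma abs_covariance_le_var:
  fixes U V :: "'a \<Rightarrow> real"
  assumes [measurable]: "U \<in> borel_measurable M" "V \<in> borel_measurable M"
    and "integrable M (\<lambda>w. (U w)\<^sup>2)" "integrable M (\<lambda>w. (V w)\<^sup>2)"
    and "var M U = var M V"
  shows "\<bar>covariance M U V\<bar> \<le> var M U"
proof -
  define U' where "U' w = U w - integral\<^sup>L M U" for w
  define V' where "V' w = V w - integral\<^sup>L M V" for w
  have [measurable]: "U' \<in> borel_measurable M" "V' \<in> borel_measurable M"
    by (simp_all add: U'_def[abs_def] V'_def[abs_def])
  have sq: "integrable M (\<lambda>w. (U' w)\<^sup>2)" "integrable M (\<lambda>w. (V' w)\<^sup>2)"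
    unfolding U'_def V'_def
    using square_integrable_add[of U "\<lambda>_. - expectation U"] square_integrable_add[of V "\<lambda>_. - expectation V"] assms
    by simp_all
  have expand: "(\<integral>w. (U' w + s * V' w)\<^sup>2 \<partial>M) = var M U + 2 * s * covariance M U V + s\<^sup>2 * var M V" for s
  proof -
    have "(\<integral>w. (U' w + s * V' w)\<^sup>2 \<partial>M) = (\<integral>w. (U' w)\<^sup>2 + 2 * s * (U' w * V' w) + s\<^sup>2 * (V' w)\<^sup>2 \<partial>M)"
      by (rule Bochner_Integration.integral_cong) (simp_all add: power2_eq_square algebra_simps)
    also have "\<dots> = var M U + 2 * s * covariance M U V + s\<^sup>2 * var M V"
      using sq square_integrable_mult[OF _ _ sq] by (simp add: var_def covariance_def U'_def V'_def)
    finally show ?thesis .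
  qed
  have "0 \<le> var M U + 2 * s * covariance M U V + s\<^sup>2 * var M V" for s
    unfolding expand[symmetric] by simp
  from this[of 1] this[of "-1"] show ?thesis
    using assms(5) by (simp add: abs_le_iff)
qed

end

(* Junk values for laws without finite second moment; they are only evaluated at P1 w and P2 w,
   which are square integrable for almost every w. *)
definition mean :: "real measure \<Rightarrow> real" where
  "mean p = (\<integral>x. x \<partial>p)"

definition second_moment :: "real measure \<Rightarrow> real" where
  "second_moment p = (\<integral>x. x\<^sup>2 \<partial>p)"

lemma measurable_nn_integral_prob_algebra[measurable]:
  assumes "N \<in> M \<rightarrow>\<^sub>M prob_algebra K" "f \<in> borel_measurable K"
  shows "(\<lambda>w. \<integral>\<^sup>+x. f x \<partial>N w) \<in> borel_measurable M"
  using measurable_compose[OF measurable_prob_algebraD[OF assms(1)] nn_integral_measurable_subprob_algebra[OF assms(2)]]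
  by simp

lemma measurable_integral_prob_algebra[measurable]:
  fixes f :: "'b \<Rightarrow> real"
  assumes "N \<in> M \<rightarrow>\<^sub>M prob_algebra K" "f \<in> borel_measurable K"
  shows "(\<lambda>w. \<integral>x. f x \<partial>N w) \<in> borel_measurable M"
  using measurable_compose[OF measurable_prob_algebraD[OF assms(1)] integral_measurable_subprob_algebra[OF assms(2)]]
  by simp

lemma measurable_mean[measurable]:
  "N \<in> M \<rightarrow>\<^sub>M prob_algebra borel \<Longrightarrow> (\<lambda>w. mean (N w)) \<in> borel_measurable M"
  unfolding mean_def by measurable

lemma measurable_second_moment[measurable]:
  "N \<in> M \<rightarrow>\<^sub>M prob_algebra borel \<Longrightarrow> (\<lambda>w. second_moment (N w)) \<in> borel_measurable M"
  unfolding second_moment_def by measurable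

lemma mean_square_le_second_moment:
  assumes "prob_space p" "sets p = sets borel" "integrable p (\<lambda>x. x\<^sup>2)"
  shows "(mean p)\<^sup>2 \<le> second_moment p"
proof -
  have "(\<lambda>x. x) \<in> borel_measurable p"
    using assms(2) by (simp cong: measurable_cong_sets)
  then show ?thesis
    using prob_space.var_eq_integral_square[OF assms(1) _ assms(3)] var_nonneg[of p "\<lambda>x. x"]
    by (simp add: mean_def second_moment_def)
qed

lemma nn_integral_affine_square:
  assumes p: "prob_space p" "sets p = sets borel" "integrable p (\<lambda>x. x\<^sup>2)" and "0 \<le> k"
  shows "(\<integral>\<^sup>+x. ennreal ((u * x + v)\<^sup>2 + k) \<partial>p)
       = ennreal ((u * mean p + v)\<^sup>2 + u\<^sup>2 * (second_moment p - (mean p)\<^sup>2) + k)"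
proof -
  interpret prob_space p by fact
  have [measurable]: "(\<lambda>x. x) \<in> borel_measurable p"
    using p(2) by (simp cong: measurable_cong_sets)
  have "integrable p (\<lambda>x. x)"
    using p(3) by (rule square_integrable_imp_integrable[rotated]) simp
  have expand: "(\<lambda>x. (u * x + v)\<^sup>2 + k) = (\<lambda>x. u\<^sup>2 * x\<^sup>2 + 2 * u * v * x + (v\<^sup>2 + k))"
    by (simp add: fun_eq_iff power2_eq_square algebra_simps)
  have int: "integrable p (\<lambda>x. (u * x + v)\<^sup>2 + k)"
    unfolding expand using p(3) \<open>integrable p (\<lambda>x. x)\<close> by simp
  have "(\<integral>\<^sup>+x. ennreal ((u * x + v)\<^sup>2 + k) \<partial>p) = ennreal (\<integral>x. (u * x + v)\<^sup>2 + k \<partial>p)"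
    using int \<open>0 \<le> k\<close> by (intro nn_integral_eq_integral) auto
  also have "(\<integral>x. (u * x + v)\<^sup>2 + k \<partial>p) = u\<^sup>2 * second_moment p + 2 * u * v * mean p + (v\<^sup>2 + k)"
    unfolding expand using p(3) \<open>integrable p (\<lambda>x. x)\<close>
    by (simp add: mean_def second_moment_def prob_space)
  also have "\<dots> = (u * mean p + v)\<^sup>2 + u\<^sup>2 * (second_moment p - (mean p)\<^sup>2) + k"
    by (simp add: power2_eq_square algebra_simps)
  finally show ?thesis .
qed

lemma nn_integral_square_linear_combination:
  fixes p q :: "real measure"
  assumes p: "prob_space p" "sets p = sets borel" "integrable p (\<lambda>x. x\<^sup>2)"
    and q: "prob_space q" "sets q = sets borel" "integrable q (\<lambda>x. x\<^sup>2)"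
  shows "(\<integral>\<^sup>+x. \<integral>\<^sup>+x'. \<integral>\<^sup>+y. ennreal ((a * x + b * x' + c * y + d)\<^sup>2) \<partial>q \<partial>p \<partial>p)
       = ennreal ((a * mean p + b * mean p + c * mean q + d)\<^sup>2
           + (a\<^sup>2 + b\<^sup>2) * (second_moment p - (mean p)\<^sup>2) + c\<^sup>2 * (second_moment q - (mean q)\<^sup>2))"
proof -
  define vp where "vp = second_moment p - (mean p)\<^sup>2"
  define vq where "vq = second_moment q - (mean q)\<^sup>2"
  have "0 \<le> vp" "0 \<le> vq"
    using mean_square_le_second_moment[OF p] mean_square_le_second_moment[OF q]
    by (simp_all add: vp_def vq_def)
  have inner: "(\<integral>\<^sup>+y. ennreal ((a * x + b * x' + c * y + d)\<^sup>2) \<partial>q)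
      = ennreal ((b * x' + (a * x + c * mean q + d))\<^sup>2 + c\<^sup>2 * vq)" for x x'
    using nn_integral_affine_square[OF q order_refl, of c "a * x + b * x' + d", folded vq_def]
    by (simp add: algebra_simps)
  have middle: "(\<integral>\<^sup>+x'. ennreal ((b * x' + (a * x + c * mean q + d))\<^sup>2 + c\<^sup>2 * vq) \<partial>p)
      = ennreal ((a * x + (b * mean p + c * mean q + d))\<^sup>2 + (b\<^sup>2 * vp + c\<^sup>2 * vq))" for x
    using nn_integral_affine_square[OF p, of "c\<^sup>2 * vq" b "a * x + c * mean q + d", folded vp_def] \<open>0 \<le> vq\<close>
    by (simp add: algebra_simps)
  have outer: "(\<integral>\<^sup>+x. ennreal ((a * x + (b * mean p + c * mean q + d))\<^sup>2 + (b\<^sup>2 * vp + c\<^sup>2 * vq)) \<partial>p)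
      = ennreal ((a * mean p + b * mean p + c * mean q + d)\<^sup>2 + (a\<^sup>2 + b\<^sup>2) * vp + c\<^sup>2 * vq)"
    using nn_integral_affine_square[OF p, of "b\<^sup>2 * vp + c\<^sup>2 * vq" a "b * mean p + c * mean q + d", folded vp_def] \<open>0 \<le> vp\<close> \<open>0 \<le> vq\<close>
    by (simp add: algebra_simps)
  show ?thesis
    unfolding inner middle outer by (simp add: vp_def vq_def)
qed

lemma nn_integral_PiM_component:
  assumes p: "prob_space p" and K: "finite K" "j \<in> K"
    and h[measurable]: "h \<in> borel_measurable p"
  shows "(\<integral>\<^sup>+x. h (x j) \<partial>PiM K (\<lambda>_. p)) = (\<integral>\<^sup>+a. h a \<partial>p)"
proof -
  interpret product_prob_space "\<lambda>_. p" K
    using p by (simp add: product_prob_space_def product_prob_space_axioms_def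
        product_sigma_finite_def prob_space_imp_sigma_finite)
  have sub: "{j} \<subseteq> K" using K by auto
  have "(\<integral>\<^sup>+x. h (x j) \<partial>PiM K (\<lambda>_. p)) = (\<integral>\<^sup>+x. h (restrict x {j} j) \<partial>PiM K (\<lambda>_. p))"
    by simp
  also have "\<dots> = (\<integral>\<^sup>+x. h (x j) \<partial>PiM {j} (\<lambda>_. p))"
    by (subst distr_restrict[OF sub K(1)], subst nn_integral_distr) (auto intro: measurable_restrict_subset[OF sub])
  also have "\<dots> = (\<integral>\<^sup>+a. h a \<partial>p)"
    by (rule product_nn_integral_singleton) simp
  finally show ?thesis .
qed

lemma nn_integral_PiM_two_components:
  assumes p: "prob_space p" and K: "finite K" "i \<in> K" "i' \<in> K" "i \<noteq> i'"
    and h[measurable]: "case_prod h \<in> borel_measurable (p \<Otimes>\<^sub>M p)"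
  shows "(\<integral>\<^sup>+x. h (x i) (x i') \<partial>PiM K (\<lambda>_. p)) = (\<integral>\<^sup>+a. \<integral>\<^sup>+b. h a b \<partial>p \<partial>p)"
proof -
  interpret product_prob_space "\<lambda>_. p" K
    using p by (simp add: product_prob_space_def product_prob_space_axioms_def
        product_sigma_finite_def prob_space_imp_sigma_finite)
  interpret pair_sigma_finite p p
    by (simp add: pair_sigma_finite_def prob_space_imp_sigma_finite p)
  have sub: "{i, i'} \<subseteq> K" using K by auto
  have "(\<integral>\<^sup>+x. h (x i) (x i') \<partial>PiM K (\<lambda>_. p))
      = (\<integral>\<^sup>+x. h (restrict x {i,i'} i) (restrict x {i,i'} i') \<partial>PiM K (\<lambda>_. p))"
    by simp
  also have "\<dots> = (\<integral>\<^sup>+x. h (x i) (x i') \<partial>PiM {i,i'} (\<lambda>_. p))"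
    by (subst distr_restrict[OF sub K(1)], subst nn_integral_distr) (auto intro: measurable_restrict_subset[OF sub])
  also have "\<dots> = (\<integral>\<^sup>+z. h (fst z) (snd z) \<partial>(p \<Otimes>\<^sub>M p))"
    by (rule product_nn_integral_pair[OF h K(4)])
  also have "\<dots> = (\<integral>\<^sup>+a. \<integral>\<^sup>+b. h a b \<partial>p \<partial>p)"
    using sigma_finite_measure.nn_integral_fst[OF prob_space_imp_sigma_finite[OF p] h] by (simp add: case_prod_beta')
  finally show ?thesis .
qed

lemma nn_integral_PiM_pair_components:
  assumes p: "prob_space p" and q: "prob_space q"
    and I: "finite I" "i \<in> I" "i' \<in> I" "i \<noteq> i'" "j \<in> I"
    and h[measurable]: "h \<in> borel_measurable (p \<Otimes>\<^sub>M p \<Otimes>\<^sub>M q)"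
  shows "(\<integral>\<^sup>+z. h (fst z i, fst z i', snd z j) \<partial>(PiM I (\<lambda>_. p) \<Otimes>\<^sub>M PiM I (\<lambda>_. q)))
       = (\<integral>\<^sup>+x. \<integral>\<^sup>+x'. \<integral>\<^sup>+y. h (x, x', y) \<partial>q \<partial>p \<partial>p)"
proof -
  interpret q: prob_space q by fact
  interpret Pq: prob_space "PiM I (\<lambda>_. q)" by (intro prob_space_PiM q)
  have "(\<integral>\<^sup>+z. h (fst z i, fst z i', snd z j) \<partial>(PiM I (\<lambda>_. p) \<Otimes>\<^sub>M PiM I (\<lambda>_. q)))
      = (\<integral>\<^sup>+x. \<integral>\<^sup>+y. h (x i, x i', y j) \<partial>PiM I (\<lambda>_. q) \<partial>PiM I (\<lambda>_. p))"
    using I by (subst Pq.nn_integral_fst[symmetric]) (simp_all add: case_prod_beta')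
  also have "\<dots> = (\<integral>\<^sup>+x. (\<lambda>u v. \<integral>\<^sup>+y. h (u, v, y) \<partial>q) (x i) (x i') \<partial>PiM I (\<lambda>_. p))"
  proof (intro nn_integral_cong)
    fix x assume "x \<in> space (PiM I (\<lambda>_. p))"
    then have [measurable]: "x i \<in> space p" "x i' \<in> space p"
      using I by (auto simp: space_PiM)
    have "(\<lambda>y. h (x i, x i', y)) \<in> borel_measurable q"
      by measurable
    from nn_integral_PiM_component[OF q I(1,5) this]
    show "(\<integral>\<^sup>+y. h (x i, x i', y j) \<partial>PiM I (\<lambda>_. q)) = (\<lambda>u v. \<integral>\<^sup>+y. h (u, v, y) \<partial>q) (x i) (x i')"
      by simp
  qed
  also have "\<dots> = (\<integral>\<^sup>+x. \<integral>\<^sup>+x'. \<integral>\<^sup>+y. h (x, x', y) \<partial>q \<partial>p \<partial>p)"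
  proof (rule nn_integral_PiM_two_components[OF p I(1-4)])
    have "(\<lambda>(uv, y). h (fst uv, snd uv, y)) \<in> borel_measurable ((p \<Otimes>\<^sub>M p) \<Otimes>\<^sub>M q)"
      by measurable
    then show "(\<lambda>(u, v). \<integral>\<^sup>+y. h (u, v, y) \<partial>q) \<in> borel_measurable (p \<Otimes>\<^sub>M p)"
      by (simp add: case_prod_beta' q.borel_measurable_nn_integral)
  qed
  finally show ?thesis .
qed

lemma measurable_PiM_prob_algebra:
  assumes I: "finite I"
  shows "(\<lambda>p. PiM I (\<lambda>_. p)) \<in> prob_algebra N \<rightarrow>\<^sub>M prob_algebra (PiM I (\<lambda>_. N))"
proof (rule measurable_prob_algebra_generated[OF sets_PiM Int_stable_prod_algebra prod_algebra_sets_into_space])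
  fix a assume a: "a \<in> space (prob_algebra N)"
  then show "prob_space (PiM I (\<lambda>_. a))"
    by (intro prob_space_PiM) (auto simp: space_prob_algebra)
  show "sets (PiM I (\<lambda>_. a)) = sets (PiM I (\<lambda>_. N))"
    using a by (intro sets_PiM_cong) (auto simp: space_prob_algebra)
next
  fix A assume "A \<in> prod_algebra I (\<lambda>_. N)"
  then obtain E where A: "A = Pi\<^sub>E I E" and E: "E \<in> (\<Pi> i\<in>I. sets N)"
    by (rule prod_algebraE_all)
  have "(\<lambda>a. \<Prod>i\<in>I. emeasure a (E i)) \<in> borel_measurable (prob_algebra N)"
    using E
    by (intro borel_measurable_prod_ennreal measurable_comp[OF measurable_prob_algebraD[OF measurable_ident_sets[OF refl]] measurable_emeasure_subprob_algebra, unfolded comp_def id_def])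
       auto
  then show "(\<lambda>a. emeasure (PiM I (\<lambda>_. a)) A) \<in> borel_measurable (prob_algebra N)"
  proof (rule measurable_cong[THEN iffD1, rotated])
    fix a assume a: "a \<in> space (prob_algebra N)"
    interpret product_prob_space "\<lambda>_. a" I
      using a by (simp add: space_prob_algebra product_prob_space_def product_prob_space_axioms_def
        product_sigma_finite_def prob_space_imp_sigma_finite)
    show "(\<Prod>i\<in>I. emeasure a (E i)) = emeasure (PiM I (\<lambda>_. a)) A"
      unfolding A using E a I by (subst emeasure_PiM) (auto simp: space_prob_algebra)
  qed
qed

lemma nn_integral_return_pair_measure:
  assumes "x \<in> space L" "sigma_finite_measure B" "f \<in> borel_measurable B"
  shows "(\<integral>\<^sup>+z. f (snd z) \<partial>(return L x \<Otimes>\<^sub>M B)) = (\<integral>\<^sup>+y. f y \<partial>B)"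
proof -
  have "(\<integral>\<^sup>+z. f (snd z) \<partial>(return L x \<Otimes>\<^sub>M B)) = (\<integral>\<^sup>+u. \<integral>\<^sup>+y. f y \<partial>B \<partial>return L x)"
    using assms by (subst sigma_finite_measure.nn_integral_fst[symmetric]) auto
  also have "\<dots> = (\<integral>\<^sup>+y. f y \<partial>B)"
    using assms(1) by (simp add: nn_integral_return)
  finally show ?thesis .
qed

lemma nn_integral_return_PiM_pair_components:
  fixes p q :: "real measure"
  assumes x: "x \<in> space L"
    and p: "prob_space p" "sets p = sets borel" and q: "prob_space q" "sets q = sets borel"
    and I: "finite I" "i \<in> I" "i' \<in> I" "i \<noteq> i'" "j \<in> I"
    and h[measurable]: "h \<in> borel_measurable (borel \<Otimes>\<^sub>M borel \<Otimes>\<^sub>M borel)"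
  shows "(\<integral>\<^sup>+z. h (fst (snd z) i, fst (snd z) i', snd (snd z) j) \<partial>(return L x \<Otimes>\<^sub>M (PiM I (\<lambda>_. p) \<Otimes>\<^sub>M PiM I (\<lambda>_. q))))
       = (\<integral>\<^sup>+x. \<integral>\<^sup>+x'. \<integral>\<^sup>+y. h (x, x', y) \<partial>q \<partial>p \<partial>p)"
proof -
  have "sets (PiM I (\<lambda>_. p) \<Otimes>\<^sub>M PiM I (\<lambda>_. q)) = sets (PiM I (\<lambda>_. borel) \<Otimes>\<^sub>M PiM I (\<lambda>_. borel))"
    by (intro sets_pair_measure_cong sets_PiM_cong) (simp_all add: p q)
  moreover have "(\<lambda>z. h (fst z i, fst z i', snd z j)) \<in> borel_measurable (PiM I (\<lambda>_. borel) \<Otimes>\<^sub>M PiM I (\<lambda>_. borel))"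
    using I by measurable
  ultimately have "(\<lambda>z. h (fst z i, fst z i', snd z j)) \<in> borel_measurable (PiM I (\<lambda>_. p) \<Otimes>\<^sub>M PiM I (\<lambda>_. q))"
    by (simp cong: measurable_cong_sets)
  moreover have "sigma_finite_measure (PiM I (\<lambda>_. p) \<Otimes>\<^sub>M PiM I (\<lambda>_. q))"
    by (intro prob_space_imp_sigma_finite prob_space_pair prob_space_PiM p q)
  ultimately have "(\<integral>\<^sup>+z. h (fst (snd z) i, fst (snd z) i', snd (snd z) j) \<partial>(return L x \<Otimes>\<^sub>M (PiM I (\<lambda>_. p) \<Otimes>\<^sub>M PiM I (\<lambda>_. q))))
      = (\<integral>\<^sup>+z. h (fst z i, fst z i', snd z j) \<partial>(PiM I (\<lambda>_. p) \<Otimes>\<^sub>M PiM I (\<lambda>_. q)))"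
    using nn_integral_return_pair_measure[OF x, where f = "\<lambda>z. h (fst z i, fst z i', snd z j)"] by simp
  also have "\<dots> = (\<integral>\<^sup>+x. \<integral>\<^sup>+x'. \<integral>\<^sup>+y. h (x, x', y) \<partial>q \<partial>p \<partial>p)"
    using I by (intro nn_integral_PiM_pair_components p q)
      (simp_all add: measurable_cong_sets[OF sets_pair_measure_cong[OF p(2) sets_pair_measure_cong[OF p(2) q(2)]] refl])
  finally show ?thesis .
qed

locale conditionally_iid_sequences = prob_space M
  for M :: "'a measure" and X Y :: "nat \<Rightarrow> 'a \<Rightarrow> real" and P1 P2 :: "'a \<Rightarrow> real measure" +
  assumes X_measurable[measurable]: "\<And>i. X i \<in> borel_measurable M"
    and Y_measurable[measurable]: "\<And>j. Y j \<in> borel_measurable M"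
    and P1_measurable[measurable]: "P1 \<in> M \<rightarrow>\<^sub>M prob_algebra borel"
    and P2_measurable[measurable]: "P2 \<in> M \<rightarrow>\<^sub>M prob_algebra borel"
    and cond_iid: "\<And>n::nat.
      distr M ((prob_algebra borel \<Otimes>\<^sub>M prob_algebra borel) \<Otimes>\<^sub>M
               (PiM {1..n} (\<lambda>_. borel) \<Otimes>\<^sub>M PiM {1..n} (\<lambda>_. borel)))
        (\<lambda>w. ((P1 w, P2 w), (\<lambda>i\<in>{1..n}. X i w, \<lambda>j\<in>{1..n}. Y j w)))
      = distr M (prob_algebra borel \<Otimes>\<^sub>M prob_algebra borel) (\<lambda>w. (P1 w, P2 w)) \<bind>
          (\<lambda>(p, q). return (prob_algebra borel \<Otimes>\<^sub>M prob_algebra borel) (p, q) \<Otimes>\<^sub>M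
                      (PiM {1..n} (\<lambda>_. p) \<Otimes>\<^sub>M PiM {1..n} (\<lambda>_. q)))"
begin

lemma prob_space_P:
  assumes "w \<in> space M"
  shows "prob_space (P1 w)" "sets (P1 w) = sets borel" "prob_space (P2 w)" "sets (P2 w) = sets borel"
  using measurable_space[OF P1_measurable assms] measurable_space[OF P2_measurable assms]
  by (auto simp: space_prob_algebra)

lemma nn_integral_conditionally_iid:
  assumes ij: "1 \<le> i" "1 \<le> i'" "i \<noteq> i'" "1 \<le> j"
    and h[measurable]: "h \<in> borel_measurable (borel \<Otimes>\<^sub>M borel \<Otimes>\<^sub>M borel)"
  shows "(\<integral>\<^sup>+w. h (X i w, X i' w, Y j w) \<partial>M)
       = (\<integral>\<^sup>+w. \<integral>\<^sup>+x. \<integral>\<^sup>+x'. \<integral>\<^sup>+y. h (x, x', y) \<partial>P2 w \<partial>P1 w \<partial>P1 w \<partial>M)"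
proof -
  define I where "I = {1..max i (max i' j)}"
  define Q where "Q = (prob_algebra borel \<Otimes>\<^sub>M prob_algebra borel :: (real measure \<times> real measure) measure)"
  define R where "R = (PiM I (\<lambda>_. borel) :: (nat \<Rightarrow> real) measure)"
  define K where "K = (\<lambda>(p, q). return Q (p, q) \<Otimes>\<^sub>M (PiM I (\<lambda>_. p) \<Otimes>\<^sub>M PiM I (\<lambda>_. q)))"
  define F where "F = (\<lambda>z::(real measure \<times> real measure) \<times> (nat \<Rightarrow> real) \<times> (nat \<Rightarrow> real).
     h (fst (snd z) i, fst (snd z) i', snd (snd z) j))"
  have I: "finite I" "i \<in> I" "i' \<in> I" "j \<in> I" using ij by (auto simp: I_def)
  have F_measurable: "F \<in> borel_measurable (Q \<Otimes>\<^sub>M (R \<Otimes>\<^sub>M R))"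
    unfolding F_def R_def using I by measurable
  have [measurable]: "(\<lambda>p. PiM I (\<lambda>_. p)) \<in> prob_algebra borel \<rightarrow>\<^sub>M prob_algebra R"
    unfolding R_def by (rule measurable_PiM_prob_algebra[OF I(1)])
  have K_measurable: "K \<in> Q \<rightarrow>\<^sub>M subprob_algebra (Q \<Otimes>\<^sub>M (R \<Otimes>\<^sub>M R))"
    unfolding K_def Q_def
    by (intro measurable_prob_algebraD measurable_pair_prob measurable_return_prob_space) measurable
  have K_integral: "(\<integral>\<^sup>+z. F z \<partial>K (p, q)) = (\<integral>\<^sup>+x. \<integral>\<^sup>+x'. \<integral>\<^sup>+y. h (x, x', y) \<partial>q \<partial>p \<partial>p)"
    if pq: "(p, q) \<in> space Q" for p q
    using pq I ij(3) unfolding K_def F_def case_prod_conv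
    by (intro nn_integral_return_PiM_pair_components) (auto simp: Q_def space_pair_measure space_prob_algebra)
  have distr_eq: "distr M (Q \<Otimes>\<^sub>M (R \<Otimes>\<^sub>M R)) (\<lambda>w. ((P1 w, P2 w), (\<lambda>i\<in>I. X i w, \<lambda>j\<in>I. Y j w)))
      = distr M Q (\<lambda>w. (P1 w, P2 w)) \<bind> K"
    using cond_iid unfolding Q_def R_def K_def I_def .
  have "(\<integral>\<^sup>+w. h (X i w, X i' w, Y j w) \<partial>M)
      = (\<integral>\<^sup>+w. F ((P1 w, P2 w), (\<lambda>i\<in>I. X i w, \<lambda>j\<in>I. Y j w)) \<partial>M)"
    using I by (simp add: F_def)
  also have "\<dots> = (\<integral>\<^sup>+z. F z \<partial>(distr M Q (\<lambda>w. (P1 w, P2 w)) \<bind> K))"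
    unfolding distr_eq[symmetric] using F_measurable
    by (subst nn_integral_distr) (simp_all add: Q_def R_def)
  also have "\<dots> = (\<integral>\<^sup>+w. \<integral>\<^sup>+z. F z \<partial>K (P1 w, P2 w) \<partial>M)"
    using K_measurable F_measurable
    by (subst nn_integral_bind[where B = "Q \<Otimes>\<^sub>M (R \<Otimes>\<^sub>M R)"], simp_all, subst nn_integral_distr)
       (auto simp: Q_def intro!: measurable_compose[OF _ nn_integral_measurable_subprob_algebra])
  also have "\<dots> = (\<integral>\<^sup>+w. \<integral>\<^sup>+x. \<integral>\<^sup>+x'. \<integral>\<^sup>+y. h (x, x', y) \<partial>P2 w \<partial>P1 w \<partial>P1 w \<partial>M)"
    by (intro nn_integral_cong K_integral) (auto simp: Q_def space_pair_measure measurable_space[OF P1_measurable] measurable_space[OF P2_measurable])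
  finally show ?thesis .
qed

lemma nn_integral_X:
  assumes "1 \<le> k" and g[measurable]: "g \<in> borel_measurable borel"
  shows "(\<integral>\<^sup>+w. g (X k w) \<partial>M) = (\<integral>\<^sup>+w. \<integral>\<^sup>+x. g x \<partial>P1 w \<partial>M)"
proof -
  have "(\<integral>\<^sup>+w. g (X k w) \<partial>M) = (\<integral>\<^sup>+w. \<integral>\<^sup>+x. \<integral>\<^sup>+x'. \<integral>\<^sup>+y. g x \<partial>P2 w \<partial>P1 w \<partial>P1 w \<partial>M)"
    using nn_integral_conditionally_iid[of k "Suc k" 1 "\<lambda>z. g (fst z)"] assms by simp
  also have "\<dots> = (\<integral>\<^sup>+w. \<integral>\<^sup>+x. g x \<partial>P1 w \<partial>M)"
    by (intro nn_integral_cong) (simp add: prob_space_P prob_space.emeasure_space_1)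
  finally show ?thesis .
qed

end

locale conditionally_iid_sequences_equal_marginals = conditionally_iid_sequences +
  assumes same_marginal: "distr M (prob_algebra borel) P1 = distr M (prob_algebra borel) P2"
    and square_integrable_X1: "integrable M (\<lambda>w. (X 1 w)\<^sup>2)"
begin

definition expected_conditional_variance :: real where
  "expected_conditional_variance = (\<integral>w. second_moment (P1 w) - (mean (P1 w))\<^sup>2 \<partial>M)"

lemma nn_integral_P2_eq_P1:
  assumes [measurable]: "g \<in> borel_measurable (prob_algebra borel)"
  shows "(\<integral>\<^sup>+w. g (P2 w) \<partial>M) = (\<integral>\<^sup>+w. g (P1 w) \<partial>M)"
  using nn_integral_distr[of P1 M "prob_algebra borel" g] nn_integral_distr[of P2 M "prob_algebra borel" g]
  by (simp add: same_marginal)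

lemma integral_P2_eq_P1:
  fixes g :: "real measure \<Rightarrow> real"
  assumes [measurable]: "g \<in> borel_measurable (prob_algebra borel)"
  shows "(\<integral>w. g (P2 w) \<partial>M) = (\<integral>w. g (P1 w) \<partial>M)"
  using integral_distr[of P1 M "prob_algebra borel" g] integral_distr[of P2 M "prob_algebra borel" g]
  by (simp add: same_marginal)

lemma nn_integral_square_P_finite:
  "(\<integral>\<^sup>+w. \<integral>\<^sup>+x. ennreal (x\<^sup>2) \<partial>P1 w \<partial>M) < \<infinity>"
  "(\<integral>\<^sup>+w. \<integral>\<^sup>+x. ennreal (x\<^sup>2) \<partial>P2 w \<partial>M) < \<infinity>"
proof -
  have "(\<integral>\<^sup>+w. \<integral>\<^sup>+x. ennreal (x\<^sup>2) \<partial>P1 w \<partial>M) = (\<integral>\<^sup>+w. ennreal ((X 1 w)\<^sup>2) \<partial>M)"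
    by (rule nn_integral_X[symmetric]) simp_all
  also have "\<dots> < \<infinity>"
    using nn_integral_eq_integral[OF square_integrable_X1] by simp
  finally show "(\<integral>\<^sup>+w. \<integral>\<^sup>+x. ennreal (x\<^sup>2) \<partial>P1 w \<partial>M) < \<infinity>" .
  then show "(\<integral>\<^sup>+w. \<integral>\<^sup>+x. ennreal (x\<^sup>2) \<partial>P2 w \<partial>M) < \<infinity>"
    using nn_integral_P2_eq_P1[of "\<lambda>p. \<integral>\<^sup>+x. ennreal (x\<^sup>2) \<partial>p"] by simp
qed

lemma AE_square_integrable:
  "AE w in M. integrable (P1 w) (\<lambda>x. x\<^sup>2) \<and> integrable (P2 w) (\<lambda>x. x\<^sup>2)"
proof -
  have "AE w in M. (\<integral>\<^sup>+x. ennreal (x\<^sup>2) \<partial>P1 w) \<noteq> \<infinity> \<and> (\<integral>\<^sup>+x. ennreal (x\<^sup>2) \<partial>P2 w) \<noteq> \<infinity>"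
    using nn_integral_square_P_finite
    by (intro AE_conjI nn_integral_PInf_AE) simp_all
  then show ?thesis
  proof (rule AE_mp[OF _ AE_I2], safe)
    fix w assume w: "w \<in> space M"
    then have [measurable_cong]: "sets (P1 w) = sets borel" "sets (P2 w) = sets borel"
      by (simp_all add: prob_space_P)
    show "integrable (P1 w) (\<lambda>x. x\<^sup>2)" if "(\<integral>\<^sup>+x. ennreal (x\<^sup>2) \<partial>P1 w) \<noteq> \<infinity>"
      using that by (intro integrableI_nonneg) (simp_all add: top.not_eq_extremum)
    show "integrable (P2 w) (\<lambda>x. x\<^sup>2)" if "(\<integral>\<^sup>+x. ennreal (x\<^sup>2) \<partial>P2 w) \<noteq> \<infinity>"
      using that by (intro integrableI_nonneg) (simp_all add: top.not_eq_extremum)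
  qed
qed

lemma integrable_second_moment:
  "integrable M (\<lambda>w. second_moment (P1 w))" "integrable M (\<lambda>w. second_moment (P2 w))"
proof -
  have "AE w in M. ennreal (second_moment (P1 w)) = (\<integral>\<^sup>+x. ennreal (x\<^sup>2) \<partial>P1 w)
                 \<and> ennreal (second_moment (P2 w)) = (\<integral>\<^sup>+x. ennreal (x\<^sup>2) \<partial>P2 w)"
    using AE_square_integrable by eventually_elim (simp add: second_moment_def nn_integral_eq_integral)
  then have "(\<integral>\<^sup>+w. ennreal (second_moment (P1 w)) \<partial>M) = (\<integral>\<^sup>+w. \<integral>\<^sup>+x. ennreal (x\<^sup>2) \<partial>P1 w \<partial>M)"
    "(\<integral>\<^sup>+w. ennreal (second_moment (P2 w)) \<partial>M) = (\<integral>\<^sup>+w. \<integral>\<^sup>+x. ennreal (x\<^sup>2) \<partial>P2 w \<partial>M)"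
    by (auto intro!: nn_integral_cong_AE elim: AE_mp)
  then have "(\<integral>\<^sup>+w. ennreal (second_moment (P1 w)) \<partial>M) < \<infinity>"
    "(\<integral>\<^sup>+w. ennreal (second_moment (P2 w)) \<partial>M) < \<infinity>"
    using nn_integral_square_P_finite by simp_all
  then show "integrable M (\<lambda>w. second_moment (P1 w))" "integrable M (\<lambda>w. second_moment (P2 w))"
    by (auto intro!: integrableI_nonneg simp: second_moment_def)
qed

lemma AE_mean_square_le_second_moment:
  "AE w in M. (mean (P1 w))\<^sup>2 \<le> second_moment (P1 w) \<and> (mean (P2 w))\<^sup>2 \<le> second_moment (P2 w)"
  using AE_square_integrable AE_space
  by eventually_elim (simp add: prob_space_P mean_square_le_second_moment)

lemma integrable_mean_square:
  "integrable M (\<lambda>w. (mean (P1 w))\<^sup>2)" "integrable M (\<lambda>w. (mean (P2 w))\<^sup>2)"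
proof -
  have nonneg: "0 \<le> second_moment p" for p
    by (simp add: second_moment_def)
  show "integrable M (\<lambda>w. (mean (P1 w))\<^sup>2)"
    using AE_mean_square_le_second_moment nonneg
    by (intro Bochner_Integration.integrable_bound[OF integrable_second_moment(1)]) (auto elim: AE_mp)
  show "integrable M (\<lambda>w. (mean (P2 w))\<^sup>2)"
    using AE_mean_square_le_second_moment nonneg
    by (intro Bochner_Integration.integrable_bound[OF integrable_second_moment(2)]) (auto elim: AE_mp)
qed

lemma integrable_square_mean_combination:
  "integrable M (\<lambda>w. (a * mean (P1 w) + b * mean (P1 w) + c * mean (P2 w) + d)\<^sup>2)"
proof -
  have "integrable M (\<lambda>w. ((a + b) * mean (P1 w))\<^sup>2)" "integrable M (\<lambda>w. (c * mean (P2 w))\<^sup>2)"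
    using integrable_mean_square by (simp_all add: power_mult_distrib)
  then have "integrable M (\<lambda>w. ((a + b) * mean (P1 w) + c * mean (P2 w))\<^sup>2)"
    by (rule square_integrable_add[rotated 2]) measurable
  then have "integrable M (\<lambda>w. ((a + b) * mean (P1 w) + c * mean (P2 w) + d)\<^sup>2)"
    by (rule square_integrable_add[rotated 2]) (simp_all, measurable)
  then show ?thesis
    by (simp add: distrib_right)
qed

lemma integral_square_linear_combination:
  assumes ij: "1 \<le> i" "1 \<le> i'" "i \<noteq> i'" "1 \<le> j"
  shows "integrable M (\<lambda>w. (a * X i w + b * X i' w + c * Y j w + d)\<^sup>2)"
    and "(\<integral>w. (a * X i w + b * X i' w + c * Y j w + d)\<^sup>2 \<partial>M)
       = (\<integral>w. (a * mean (P1 w) + b * mean (P1 w) + c * mean (P2 w) + d)\<^sup>2 \<partial>M)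
         + (a\<^sup>2 + b\<^sup>2 + c\<^sup>2) * expected_conditional_variance"
proof -
  define g where "g w = (a * mean (P1 w) + b * mean (P1 w) + c * mean (P2 w) + d)\<^sup>2" for w
  define r where "r w = g w + (a\<^sup>2 + b\<^sup>2) * (second_moment (P1 w) - (mean (P1 w))\<^sup>2)
    + c\<^sup>2 * (second_moment (P2 w) - (mean (P2 w))\<^sup>2)" for w
  have g_integrable: "integrable M g"
    using integrable_square_mean_combination by (simp add: g_def[abs_def])
  have r_integrable: "integrable M r"
    unfolding r_def using g_integrable integrable_second_moment integrable_mean_square by simp
  have r_nonneg: "AE w in M. 0 \<le> r w"
    using AE_mean_square_le_second_moment by eventually_elim (simp add: r_def g_def)
  have "(\<integral>\<^sup>+w. ennreal ((a * X i w + b * X i' w + c * Y j w + d)\<^sup>2) \<partial>M)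
      = (\<integral>\<^sup>+w. \<integral>\<^sup>+x. \<integral>\<^sup>+x'. \<integral>\<^sup>+y. ennreal ((a * x + b * x' + c * y + d)\<^sup>2) \<partial>P2 w \<partial>P1 w \<partial>P1 w \<partial>M)"
    using nn_integral_conditionally_iid[OF ij, of "\<lambda>(x, x', y). ennreal ((a * x + b * x' + c * y + d)\<^sup>2)"]
    by simp
  also have "\<dots> = (\<integral>\<^sup>+w. ennreal (r w) \<partial>M)"
    using AE_square_integrable AE_space
    by (intro nn_integral_cong_AE, eventually_elim)
       (simp add: prob_space_P nn_integral_square_linear_combination r_def g_def)
  also have "\<dots> = ennreal (\<integral>w. r w \<partial>M)"
    by (rule nn_integral_eq_integral[OF r_integrable r_nonneg])
  finally have "has_bochner_integral M (\<lambda>w. (a * X i w + b * X i' w + c * Y j w + d)\<^sup>2) (\<integral>w. r w \<partial>M)"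
    using r_nonneg by (intro has_bochner_integral_nn_integral integral_nonneg_AE) simp_all
  moreover have "(\<integral>w. r w \<partial>M)
      = (\<integral>w. g w \<partial>M) + (a\<^sup>2 + b\<^sup>2 + c\<^sup>2) * expected_conditional_variance"
  proof -
    have "(\<integral>w. second_moment (P2 w) - (mean (P2 w))\<^sup>2 \<partial>M) = (\<integral>w. second_moment (P1 w) - (mean (P1 w))\<^sup>2 \<partial>M)"
      by (rule integral_P2_eq_P1) measurable
    then show ?thesis
      using g_integrable integrable_second_moment integrable_mean_square by (simp add: r_def distrib_right expected_conditional_variance_def)
  qed
  ultimately show "integrable M (\<lambda>w. (a * X i w + b * X i' w + c * Y j w + d)\<^sup>2)"
    and "(\<integral>w. (a * X i w + b * X i' w + c * Y j w + d)\<^sup>2 \<partial>M)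
       = (\<integral>w. (a * mean (P1 w) + b * mean (P1 w) + c * mean (P2 w) + d)\<^sup>2 \<partial>M)
         + (a\<^sup>2 + b\<^sup>2 + c\<^sup>2) * expected_conditional_variance"
    by (auto simp: has_bochner_integral_iff g_def)
qed

lemma var_covariance_X_X:
  assumes "1 \<le> i" "1 \<le> i'" "i \<noteq> i'"
  shows "var M (X i) = var M (\<lambda>w. mean (P1 w)) + expected_conditional_variance"
    and "covariance M (X i) (X i') = var M (\<lambda>w. mean (P1 w))"
proof -
  note square_combination = integral_square_linear_combination[OF assms order_refl, where c = 0]
  have "\<And>a c d. integrable M (\<lambda>w. (a * X i w + c * X i' w + d)\<^sup>2)"
    and "\<And>a c d. (\<integral>w. (a * X i w + c * X i' w + d)\<^sup>2 \<partial>M)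
      = (\<integral>w. (a * mean (P1 w) + c * mean (P1 w) + d)\<^sup>2 \<partial>M) + a\<^sup>2 * expected_conditional_variance + c\<^sup>2 * expected_conditional_variance"
    using square_combination by (simp_all add: distrib_right)
  from var_covariance_eq_if_shifted_square_moments[OF X_measurable X_measurable
      measurable_mean[OF P1_measurable] measurable_mean[OF P1_measurable]
      integrable_mean_square(1) integrable_mean_square(1) this]
  show "var M (X i) = var M (\<lambda>w. mean (P1 w)) + expected_conditional_variance"
    and "covariance M (X i) (X i') = var M (\<lambda>w. mean (P1 w))"
    by (simp_all add: covariance_self)
qed

lemma var_covariance_X_Y:
  assumes "1 \<le> i" "1 \<le> j"
  shows "var M (Y j) = var M (\<lambda>w. mean (P2 w)) + expected_conditional_variance"
    and "covariance M (X i) (Y j) = covariance M (\<lambda>w. mean (P1 w)) (\<lambda>w. mean (P2 w))"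
proof -
  have "1 \<le> Suc i" "i \<noteq> Suc i" using assms by simp_all
  note square_combination = integral_square_linear_combination[OF assms(1) this assms(2), where b = 0]
  have "\<And>a c d. integrable M (\<lambda>w. (a * X i w + c * Y j w + d)\<^sup>2)"
    and "\<And>a c d. (\<integral>w. (a * X i w + c * Y j w + d)\<^sup>2 \<partial>M)
      = (\<integral>w. (a * mean (P1 w) + c * mean (P2 w) + d)\<^sup>2 \<partial>M) + a\<^sup>2 * expected_conditional_variance + c\<^sup>2 * expected_conditional_variance"
    using square_combination by (simp_all add: distrib_right)
  from var_covariance_eq_if_shifted_square_moments[OF X_measurable Y_measurable
      measurable_mean[OF P1_measurable] measurable_mean[OF P2_measurable]
      integrable_mean_square this]
  show "var M (Y j) = var M (\<lambda>w. mean (P2 w)) + expected_conditional_variance"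
    and "covariance M (X i) (Y j) = covariance M (\<lambda>w. mean (P1 w)) (\<lambda>w. mean (P2 w))"
    by simp_all
qed

lemma var_mean_P2_eq_P1: "var M (\<lambda>w. mean (P2 w)) = var M (\<lambda>w. mean (P1 w))"
  using integrable_mean_square integral_P2_eq_P1[of mean] integral_P2_eq_P1[of "\<lambda>p. (mean p)\<^sup>2"]
  by (simp add: var_eq_integral_square)

end

theorem proposition1:
  fixes M :: "'a measure"
    and X Y :: "nat \<Rightarrow> 'a \<Rightarrow> real"
    and P1 P2 :: "'a \<Rightarrow> real measure"
  assumes "prob_space M"
    and X_meas: "\<And>i. X i \<in> borel_measurable M"
    and Y_meas: "\<And>j. Y j \<in> borel_measurable M"
    and P1_meas: "P1 \<in> measurable M (prob_algebra borel)"
    and P2_meas: "P2 \<in> measurable M (prob_algebra borel)"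
    and cond_iid: "\<And>n::nat.
      distr M ((prob_algebra borel \<Otimes>\<^sub>M prob_algebra borel) \<Otimes>\<^sub>M
               (PiM {1..n} (\<lambda>_. borel) \<Otimes>\<^sub>M PiM {1..n} (\<lambda>_. borel)))
        (\<lambda>w. ((P1 w, P2 w), (\<lambda>i\<in>{1..n}. X i w, \<lambda>j\<in>{1..n}. Y j w)))
      = distr M (prob_algebra borel \<Otimes>\<^sub>M prob_algebra borel) (\<lambda>w. (P1 w, P2 w)) \<bind>
          (\<lambda>(p, q). return (prob_algebra borel \<Otimes>\<^sub>M prob_algebra borel) (p, q) \<Otimes>\<^sub>M
                      (PiM {1..n} (\<lambda>_. p) \<Otimes>\<^sub>M PiM {1..n} (\<lambda>_. q)))"
    and same_marginal: "distr M (prob_algebra borel) P1 = distr M (prob_algebra borel) P2"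
    and finite_var: "integrable M (\<lambda>w. (X 1 w)\<^sup>2)"
    and pos_var: "var M (X 1) > 0"
    and "i \<ge> 1" and "i' \<ge> 1" and "i \<noteq> i'" and "j \<ge> 1"
  shows "- corr M (X i) (X i') \<le> corr M (X i) (Y j)
         \<and> corr M (X i) (Y j) \<le> corr M (X i) (X i')"
proof -
  interpret conditionally_iid_sequences_equal_marginals M X Y P1 P2
    using assms by (simp add: conditionally_iid_sequences_equal_marginals_def
      conditionally_iid_sequences_equal_marginals_axioms_def
      conditionally_iid_sequences_def conditionally_iid_sequences_axioms_def)
  have var_X1: "var M (X 1) = var M (\<lambda>w. mean (P1 w)) + expected_conditional_variance"
    by (rule var_covariance_X_X(1)[of 1 2]) simp_all
  have var_X: "var M (X k) = var M (X 1)" if "1 \<le> k" for k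
    using var_covariance_X_X(1)[OF that, of "Suc k"] var_X1 that by simp
  have var_Y: "var M (Y j) = var M (X 1)"
    using var_covariance_X_Y(1)[OF \<open>i \<ge> 1\<close> \<open>j \<ge> 1\<close>] var_X1 var_mean_P2_eq_P1 by linarith
  have corr_X_X: "corr M (X i) (X i') = var M (\<lambda>w. mean (P1 w)) / var M (X 1)"
    using var_covariance_X_X(2)[OF \<open>i \<ge> 1\<close> \<open>i' \<ge> 1\<close> \<open>i \<noteq> i'\<close>]
      var_X[OF \<open>i \<ge> 1\<close>] var_X[OF \<open>i' \<ge> 1\<close>]
    by (simp add: corr_eq_covariance_div_var)
  have corr_X_Y: "corr M (X i) (Y j) = covariance M (\<lambda>w. mean (P1 w)) (\<lambda>w. mean (P2 w)) / var M (X 1)"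
    using var_covariance_X_Y(2)[OF \<open>i \<ge> 1\<close> \<open>j \<ge> 1\<close>] var_X[OF \<open>i \<ge> 1\<close>] var_Y
    by (simp add: corr_eq_covariance_div_var)
  have "\<bar>covariance M (\<lambda>w. mean (P1 w)) (\<lambda>w. mean (P2 w))\<bar> \<le> var M (\<lambda>w. mean (P1 w))"
    using integrable_mean_square var_mean_P2_eq_P1 by (intro abs_covariance_le_var) simp_all
  then show ?thesis
    unfolding corr_X_X corr_X_Y using pos_var
    by (auto simp: abs_le_iff intro: divide_right_mono divide_right_mono[of "- _", simplified])
qed

end
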